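(* For every predicate $P:\{0,1\}^K\to\{0,1\}$ and $x\in\{0,1\}^N$, there is a DNF formula $\psi_x$ over $\{0,1\}^{N\cdot K}$ with at most $2^K$ terms such that $P_x(z^S)=\psi_x(z^S)$ for every hyperedge $S$. Moreover, for any hyperedge $S$, at most one term of $\psi_x$ is satisfied by $z^S$. Furthermore, there exists a CNF formula $\phi_x$ over $\{0,1\}^{N\cdot K}$ with at most $2^K$ clauses such that $\phi_x(z^S)=\psi_x(z^S)$ for every hyperedge $S$.
   Context: A hyperedge is an ordered tuple $S=(i_1,\dots,i_K)$ of $K$ distinct elements of $[N]$; $x_S=(x_{i_1},\dots,x_{i_K})$. Its encoding $z^S\in\{0,1\}^{N\cdot K}$ is the concatenation of $K$ vectors in $\{0,1\}^N$, where the $j$-th vector has $0$ in component $i_j$ and $1$ elsewhere. For $z\in\{0,1\}^{N\cdot K}$, $z_{j,l}=z_{(j-1)N+l}$. $P_x:\{0,1\}^{N\cdot K}\to\{0,1\}$ is any function satisfying $P_x(z^S)=P(x_S)$ for every hyperedge $S$. *)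

theory Defs
  imports Main
begin

(* Bit vectors in {0,1}^n are bool lists of length n (True = 1), indexed from 0.
   A literal is a pair (i, b): it is satisfied by z iff z ! i = b
   (b = True: positive literal z_i; b = False: negated literal ~z_i). *)
type_synonym literal = "nat \<times> bool"

definition lit_sat :: "literal \<Rightarrow> bool list \<Rightarrow> bool" where
  "lit_sat l z = (z ! fst l = snd l)"

definition term_sat :: "literal list \<Rightarrow> bool list \<Rightarrow> bool" where
  "term_sat t z = (\<forall>l\<in>set t. lit_sat l z)"

definition clause_sat :: "literal list \<Rightarrow> bool list \<Rightarrow> bool" where
  "clause_sat c z = (\<exists>l\<in>set c. lit_sat l z)"

definition eval_dnf :: "literal list list \<Rightarrow> bool list \<Rightarrow> bool" where
  "eval_dnf \<psi> z = (\<exists>t\<in>set \<psi>. term_sat t z)"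

definition eval_cnf :: "literal list list \<Rightarrow> bool list \<Rightarrow> bool" where
  "eval_cnf \<phi> z = (\<forall>c\<in>set \<phi>. clause_sat c z)"

definition formula_over :: "nat \<Rightarrow> literal list list \<Rightarrow> bool" where
  "formula_over M F = (\<forall>t\<in>set F. \<forall>l\<in>set t. fst l < M)"

definition num_sat_terms :: "literal list list \<Rightarrow> bool list \<Rightarrow> nat" where
  "num_sat_terms \<psi> z = length (filter (\<lambda>t. term_sat t z) \<psi>)"

definition hyperedge :: "nat \<Rightarrow> nat \<Rightarrow> nat list \<Rightarrow> bool" where
  "hyperedge N K S = (length S = K \<and> distinct S \<and> set S \<subseteq> {..<N})"

(* Encoding z^S in {0,1}^(N*K): j-th block has 0 at position S!j, 1 elsewhere;
   so (encode N S) ! (j*N + l) = (l \<noteq> S ! j). *)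
definition encode :: "nat \<Rightarrow> nat list \<Rightarrow> bool list" where
  "encode N S = concat (map (\<lambda>i. map (\<lambda>l. l \<noteq> i) [0..<N]) S)"

definition restrict_to :: "bool list \<Rightarrow> nat list \<Rightarrow> bool list" where
  "restrict_to x S = map (\<lambda>i. x ! i) S"

end

theory Submission
  imports Defs
begin

(* For a pattern b in {0,1}^K, the term "z_{j,l} for all j < K and l < N with x_l \<noteq> b_j"
   holds at z^S iff the unique zero of each block j, at position S_j, avoids the positions
   where x disagrees with b_j, i.e. iff x_S = b.  Such a term singles out one pattern, so the
   disjunction of these terms over P^-1(1) computes P(x_S) with at most one term satisfied,
   and the conjunction of their negations (clauses, by De Morgan) over P^-1(0) computes it too. *)

lemma encode_Cons: "encode N (i # S) = map (\<lambda>l. l \<noteq> i) [0..<N] @ encode N S"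
  by (simp add: encode_def)

lemma encode_nth:
  assumes "j < length S" and "l < N"
  shows "encode N S ! (j * N + l) = (l \<noteq> S ! j)"
  using assms
proof (induction S arbitrary: j)
  case (Cons i S)
  then show ?case
    by (cases j) (simp_all add: encode_Cons nth_append)
qed simp

lemma block_index_less:
  fixes j l N K :: nat
  assumes "j < K" and "l < N"
  shows "j * N + l < N * K"
proof -
  have "j * N + l < Suc j * N" using assms(2) by simp
  also have "\<dots> \<le> K * N" using assms(1) by (intro mult_le_mono1) simp
  finally show ?thesis by (simp add: mult.commute)
qed

lemma set_n_lists_bool: "set (List.n_lists K [True, False]) = {b. length b = K}"
  by (auto simp: set_n_lists)

lemma eval_dnf_map_singling_out:
  assumes "\<And>b. b \<in> set B \<Longrightarrow> term_sat (T b) z \<longleftrightarrow> b = a"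
  shows "eval_dnf (map T B) z \<longleftrightarrow> a \<in> set B"
  using assms by (auto simp: eval_dnf_def)

lemma num_sat_terms_map_singling_out:
  assumes "distinct B" and "\<And>b. b \<in> set B \<Longrightarrow> term_sat (T b) z \<longleftrightarrow> b = a"
  shows "num_sat_terms (map T B) z \<le> 1"
proof -
  have "filter (\<lambda>t. term_sat t z) (map T B) = map T (filter (\<lambda>b. b = a) B)"
    using assms(2) by (simp add: filter_map comp_def cong: filter_cong)
  moreover have "length (filter (\<lambda>b. b = a) B) \<le> 1"
    using assms(1) by (simp add: distinct_length_filter card_le_Suc0_iff_eq)
  ultimately show ?thesis by (simp add: num_sat_terms_def)
qed

definition dual_clause :: "literal list \<Rightarrow> literal list" where
  "dual_clause t = map (apsnd Not) t"

lemma clause_sat_dual_clause: "clause_sat (dual_clause t) z \<longleftrightarrow> \<not> term_sat t z"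
  by (auto simp: dual_clause_def clause_sat_def term_sat_def lit_sat_def)

lemma fst_set_dual_clause: "fst ` set (dual_clause t) = fst ` set t"
  by (force simp: dual_clause_def)

lemma eval_cnf_map_dual_singling_out:
  assumes "\<And>b. b \<in> set B \<Longrightarrow> term_sat (T b) z \<longleftrightarrow> b = a"
  shows "eval_cnf (map (dual_clause \<circ> T) B) z \<longleftrightarrow> a \<notin> set B"
  using assms by (auto simp: eval_cnf_def clause_sat_dual_clause)

definition pattern_term :: "nat \<Rightarrow> bool list \<Rightarrow> bool list \<Rightarrow> literal list" where
  "pattern_term N x b = [(j * N + l, True). j \<leftarrow> [0..<length b], l \<leftarrow> [0..<N], x ! l \<noteq> b ! j]"

lemma set_pattern_term:
  "set (pattern_term N x b) = {(j * N + l, True) | j l. j < length b \<and> l < N \<and> x ! l \<noteq> b ! j}"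
  by (auto simp: pattern_term_def; blast)

lemma pattern_term_var_less: "i \<in> fst ` set (pattern_term N x b) \<Longrightarrow> i < N * length b"
  by (auto simp: set_pattern_term intro: block_index_less)

lemma term_sat_pattern_term_encode:
  assumes "hyperedge N K S" and "length b = K"
  shows "term_sat (pattern_term N x b) (encode N S) \<longleftrightarrow> b = restrict_to x S"
proof -
  have len_S: "length S = K" and S_less: "\<And>j. j < K \<Longrightarrow> S ! j < N"
    using assms(1) nth_mem unfolding hyperedge_def by fastforce+
  have "term_sat (pattern_term N x b) (encode N S) \<longleftrightarrow>
        (\<forall>j<K. \<forall>l<N. x ! l \<noteq> b ! j \<longrightarrow> encode N S ! (j * N + l))"
    using assms(2) by (auto simp: term_sat_def lit_sat_def set_pattern_term)
  also have "\<dots> \<longleftrightarrow> (\<forall>j<K. \<forall>l<N. x ! l \<noteq> b ! j \<longrightarrow> l \<noteq> S ! j)"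
    using len_S by (simp add: encode_nth)
  also have "\<dots> \<longleftrightarrow> (\<forall>j<K. x ! (S ! j) = b ! j)"
    using S_less by blast
  also have "\<dots> \<longleftrightarrow> b = restrict_to x S"
    using assms(2) len_S by (auto simp: restrict_to_def list_eq_iff_nth_eq)
  finally show ?thesis .
qed

definition pattern_dnf :: "nat \<Rightarrow> nat \<Rightarrow> bool list \<Rightarrow> (bool list \<Rightarrow> bool) \<Rightarrow> literal list list" where
  "pattern_dnf N K x P = map (pattern_term N x) (filter P (List.n_lists K [True, False]))"

definition pattern_cnf :: "nat \<Rightarrow> nat \<Rightarrow> bool list \<Rightarrow> (bool list \<Rightarrow> bool) \<Rightarrow> literal list list" where
  "pattern_cnf N K x P =
     map (dual_clause \<circ> pattern_term N x) (filter (Not \<circ> P) (List.n_lists K [True, False]))"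

lemma length_restrict_to_hyperedge: "hyperedge N K S \<Longrightarrow> length (restrict_to x S) = K"
  by (simp add: hyperedge_def restrict_to_def)

lemma term_sat_pattern_term_encode_filter:
  assumes "hyperedge N K S" and "b \<in> set (filter Q (List.n_lists K [True, False]))"
  shows "term_sat (pattern_term N x b) (encode N S) \<longleftrightarrow> b = restrict_to x S"
  using assms by (intro term_sat_pattern_term_encode) (auto simp: set_n_lists_bool)

lemma formula_over_pattern_dnf: "formula_over (N * K) (pattern_dnf N K x P)"
  using pattern_term_var_less
  by (fastforce simp: formula_over_def pattern_dnf_def set_n_lists_bool)

lemma formula_over_pattern_cnf: "formula_over (N * K) (pattern_cnf N K x P)"
  using pattern_term_var_less fst_set_dual_clause
  by (fastforce simp: formula_over_def pattern_cnf_def set_n_lists_bool)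

lemma length_pattern_dnf: "length (pattern_dnf N K x P) \<le> 2 ^ K"
  using length_filter_le[of P "List.n_lists K [True, False]"]
  by (simp add: pattern_dnf_def length_n_lists numeral_2_eq_2)

lemma length_pattern_cnf: "length (pattern_cnf N K x P) \<le> 2 ^ K"
  using length_filter_le[of "Not \<circ> P" "List.n_lists K [True, False]"]
  by (simp add: pattern_cnf_def length_n_lists numeral_2_eq_2)

lemma eval_dnf_pattern_dnf_encode:
  assumes "hyperedge N K S"
  shows "eval_dnf (pattern_dnf N K x P) (encode N S) \<longleftrightarrow> P (restrict_to x S)"
  unfolding pattern_dnf_def
  using assms length_restrict_to_hyperedge[OF assms]
  by (subst eval_dnf_map_singling_out[OF term_sat_pattern_term_encode_filter])
     (auto simp: set_n_lists_bool)

lemma eval_cnf_pattern_cnf_encode: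
  assumes "hyperedge N K S"
  shows "eval_cnf (pattern_cnf N K x P) (encode N S) \<longleftrightarrow> P (restrict_to x S)"
  unfolding pattern_cnf_def
  using assms length_restrict_to_hyperedge[OF assms]
  by (subst eval_cnf_map_dual_singling_out[OF term_sat_pattern_term_encode_filter])
     (auto simp: set_n_lists_bool)

lemma num_sat_terms_pattern_dnf_encode:
  assumes "hyperedge N K S"
  shows "num_sat_terms (pattern_dnf N K x P) (encode N S) \<le> 1"
  unfolding pattern_dnf_def
  using assms
  by (intro num_sat_terms_map_singling_out[where a = "restrict_to x S"]
        term_sat_pattern_term_encode_filter)
     (auto simp: distinct_n_lists)

theorem lemma8p4:
  fixes N K :: nat and P :: "bool list \<Rightarrow> bool" and x :: "bool list"
  assumes "length x = N"
  shows "\<exists>\<psi>. formula_over (N * K) \<psi> \<and> length \<psi> \<le> 2 ^ K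
      \<and> (\<forall>Px :: bool list \<Rightarrow> bool.
            (\<forall>S. hyperedge N K S \<longrightarrow> Px (encode N S) = P (restrict_to x S)) \<longrightarrow>
            (\<forall>S. hyperedge N K S \<longrightarrow> Px (encode N S) = eval_dnf \<psi> (encode N S)))
      \<and> (\<forall>S. hyperedge N K S \<longrightarrow> num_sat_terms \<psi> (encode N S) \<le> 1)
      \<and> (\<exists>\<phi>. formula_over (N * K) \<phi> \<and> length \<phi> \<le> 2 ^ K
            \<and> (\<forall>S. hyperedge N K S \<longrightarrow> eval_cnf \<phi> (encode N S) = eval_dnf \<psi> (encode N S)))"
proof (intro exI conjI allI impI)
  let ?\<psi> = "pattern_dnf N K x P" and ?\<phi> = "pattern_cnf N K x P"
  show "formula_over (N * K) ?\<psi>" "length ?\<psi> \<le> 2 ^ K"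
    "formula_over (N * K) ?\<phi>" "length ?\<phi> \<le> 2 ^ K"
    by (rule formula_over_pattern_dnf length_pattern_dnf
        formula_over_pattern_cnf length_pattern_cnf)+
  fix S assume S: "hyperedge N K S"
  show "num_sat_terms ?\<psi> (encode N S) \<le> 1"
    using S by (rule num_sat_terms_pattern_dnf_encode)
  show "eval_cnf ?\<phi> (encode N S) = eval_dnf ?\<psi> (encode N S)"
    using S by (simp add: eval_cnf_pattern_cnf_encode eval_dnf_pattern_dnf_encode)
next
  fix Px :: "bool list \<Rightarrow> bool" and S
  assume "\<forall>S. hyperedge N K S \<longrightarrow> Px (encode N S) = P (restrict_to x S)" and "hyperedge N K S"
  then show "Px (encode N S) = eval_dnf (pattern_dnf N K x P) (encode N S)"
    by (simp add: eval_dnf_pattern_dnf_encode)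
qed

end
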